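(* Let $\alpha=m+n\gamma^{-1}\in\mathbb{Z}[\gamma]$ with $m,n\in\mathbb{Z}$ and $\alpha>0$, and let $\mathbf i=(i_1,\dots,i_s)$ be a representation of $\alpha$. Then $d(\mathbf i)\ge|m|+|n|$, $d_1(\mathbf i)\ge|m|$ and $d_2(\mathbf i)\ge|n|$. If $i_s\le1$ or if $i_1,\dots,i_s$ all have the same parity, then $d(\mathbf i)=|m|+|n|$ and $(d_1(\mathbf i),d_2(\mathbf i))=(|m|,|n|)$; otherwise $d(\mathbf i)>|m|+|n|$ and $(d_1(\mathbf i),d_2(\mathbf i))\neq(|m|,|n|)$. Moreover, $d_2(\mathbf i)>|n|$ whenever $i_1,\dots,i_s$ contains two positive integers of different parity.
   Context: Let $f\colon\mathbb{Z}\to\mathbb{Z}$ be defined by $f(0)=f(1)=1$, $f(i+2)=f(i+1)+f(i)$ for all $i\in\mathbb{Z}$; $\gamma=(1+\sqrt5)/2$; $\mathbb{Z}[\gamma]=\mathbb{Z}\oplus\mathbb{Z}\gamma^{-1}$. A representation of $\alpha\in\mathbb{Z}[\gamma]$ is a finite non-decreasing sequence $\mathbf i=(i_1,\dots,i_s)$ of non-negative integers ($s\ge0$) with $\alpha=\gamma^{-i_1}+\dots+\gamma^{-i_s}$ (empty sum $=0$). For such $\mathbf i$: $d(\mathbf i)=\sum_k f(i_k)$, $d_1(\mathbf i)=\sum_k f(i_k-2)$, $d_2(\mathbf i)=\sum_kf(i_k-1)$. *)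

theory Defs
  imports Complex_Main
begin

fun Fb :: "nat \<Rightarrow> int" where
  "Fb 0 = 0"
| "Fb (Suc 0) = 1"
| "Fb (Suc (Suc n)) = Fb (Suc n) + Fb n"

(* f : Z -> Z with f 0 = f 1 = 1 and f (i+2) = f (i+1) + f i for all integers i,
   i.e. f i = Fib (i+1), extended to negative indices by Fib(-k) = (-1)^(k+1) Fib k. *)
definition f :: "int \<Rightarrow> int" where
  "f i = (if i \<ge> 0 then Fb (nat i + 1) else (-1) ^ nat (-i) * Fb (nat (-i) - 1))"

lemma f_0: "f 0 = 1" and f_1: "f 1 = 1"
  by (simp_all add: f_def)

lemma Fb_rec: "Fb (Suc (Suc k)) = Fb (Suc k) + Fb k" by simp

lemma f_rec: "f (i + 2) = f (i + 1) + f i"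
proof (cases "i \<ge> 0")
  case True
  define k where "k = nat i"
  have "nat (i + 2) + 1 = Suc (Suc (Suc k))" "nat (i + 1) + 1 = Suc (Suc k)" "nat i + 1 = Suc k"
    "0 \<le> i + 2" "0 \<le> i + 1"
    using True by (simp_all add: k_def)
  then show ?thesis using True unfolding f_def by (simp only: if_True Fb.simps)
next
  case False
  obtain k where k: "i = - int (Suc k)" 
    by (rule that[of "nat (-i) - 1"]) (use False in linarith)
  consider "k = 0" | "k = 1" | l where "k = Suc (Suc l)" 
    by (cases k; cases "k - 1"; simp)
  then show ?thesis
  proof cases
    case 1 then show ?thesis using k by (simp add: f_def)
  next
    case 2 then show ?thesis using k by (simp add: f_def)
  next
    case 3
    have a: "nat (- i) = Suc (Suc (Suc l))" and b: "nat (- (i+1)) = Suc (Suc l)"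
      and c: "nat (- (i+2)) = Suc l" and "\<not> 0 \<le> i" "\<not> 0 \<le> i + 1" "\<not> 0 \<le> i + 2"
      using k 3 by simp_all
    then show ?thesis unfolding f_def by (simp add: algebra_simps)
  qed
qed

definition gam :: real where "gam = (1 + sqrt 5) / 2"

definition repval :: "nat list \<Rightarrow> real" where
  "repval is = (\<Sum>i\<leftarrow>is. inverse (gam ^ i))"

definition d :: "nat list \<Rightarrow> int" where
  "d is = (\<Sum>i\<leftarrow>is. f (int i))"

definition d1 :: "nat list \<Rightarrow> int" where
  "d1 is = (\<Sum>i\<leftarrow>is. f (int i - 2))"

definition d2 :: "nat list \<Rightarrow> int" where
  "d2 is = (\<Sum>i\<leftarrow>is. f (int i - 1))"

end

theory Submission
  imports Defs
begin

(* Write g = 1/gam, so that g^2 = 1 - g.  By induction on i,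
     gam^(-i) = x_i + y_i * g   with   x_i = (-1)^i f(i-2),  y_i = (-1)^(i+1) f(i-1).
   Since sqrt 5 is irrational, 1 and g are linearly independent over Z, hence for a
   representation is of m + n g we get  m = sum x_i  and  n = sum y_i, while
   d1 = sum |x_i|,  d2 = sum |y_i|  and  d = d1 + d2  (recursion of f).
   The triangle inequality gives the lower bounds, and it is an equality exactly
   when the summands do not take both signs.  The sign of x_i is (-1)^i except
   x_1 = 0, the sign of y_i is -(-1)^i except y_0 = 0; so d1 = |m| and d2 = |n| fail
   exactly for certain parity patterns of the indices, and a small combinatorial
   lemma shows that both hold iff all indices are <= 1 or all have equal parity. *)

section \<open>Coordinates in Z[gam] are unique\<close>

(* sqrt 5 is irrational, in the form: p^2 = 5 q^2 has no solution with q > 0 (by descent). *)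
lemma no_square_five_times_square:
  fixes p q :: nat
  assumes "q > 0"
  shows "p^2 \<noteq> 5 * q^2"
  using assms
proof (induction q arbitrary: p rule: less_induct)
  case (less q)
  show ?case
  proof
    assume h: "p^2 = 5 * q^2"
    have "(p mod 5)^2 mod 5 = 0"
      using h by (simp add: power_mod)
    moreover have "p mod 5 \<in> {0, 1, 2, 3, 4}" by auto
    ultimately have "p mod 5 = 0"
      by (auto simp: power2_eq_square)
    then obtain r where r: "p = 5 * r" by auto
    then have q_sq: "q^2 = 5 * r^2" using h by (simp add: power2_eq_square)
    have "r < q"
    proof (rule ccontr)
      assume "\<not> r < q"
      then have "q^2 \<le> r^2" by (simp add: power_mono)
      with q_sq less.prems show False by (simp add: power2_eq_square)
    qed
    moreover have "r > 0" using q_sq less.prems by (cases "r = 0") auto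
    ultimately show False using less.IH q_sq by blast
  qed
qed

lemma int_times_sqrt5_not_int:
  fixes a b :: int
  assumes "b \<noteq> 0"
  shows "real_of_int b * sqrt 5 \<noteq> real_of_int a"
proof
  assume "real_of_int b * sqrt 5 = real_of_int a"
  then have "(real_of_int b * sqrt 5)^2 = (real_of_int a)^2" by simp
  then have "real_of_int (5 * b^2) = real_of_int (a^2)" by (simp add: power_mult_distrib)
  then have "5 * b^2 = a^2" by linarith
  then have "int (5 * (nat \<bar>b\<bar>)^2) = int ((nat \<bar>a\<bar>)^2)" by simp
  then have "(nat \<bar>a\<bar>)^2 = 5 * (nat \<bar>b\<bar>)^2" by linarith
  with no_square_five_times_square[of "nat \<bar>b\<bar>" "nat \<bar>a\<bar>"] assms show False by simp
qed

lemma inverse_gam_eq: "inverse gam = (sqrt 5 - 1) / 2"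
proof -
  have "gam * ((sqrt 5 - 1) / 2) = 1" by (simp add: gam_def algebra_simps)
  then show ?thesis by (metis inverse_unique)
qed

lemma inverse_gam_sq: "inverse gam * inverse gam = 1 - inverse gam"
  unfolding inverse_gam_eq by (simp add: field_simps)

lemma Zgam_coords_unique:
  fixes a b c e :: int
  assumes "real_of_int a + real_of_int b * inverse gam = real_of_int c + real_of_int e * inverse gam"
  shows "a = c \<and> b = e"
proof -
  have "real_of_int (b - e) * inverse gam = real_of_int (c - a)"
    using assms by (simp add: algebra_simps)
  then have "real_of_int (b - e) * sqrt 5 = real_of_int (2 * (c - a) + (b - e))"
    unfolding inverse_gam_eq by (simp add: field_simps)
  then have "b = e" using int_times_sqrt5_not_int[of "b - e"] by fastforce
  then show ?thesis using assms by simp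
qed

section \<open>Coordinates of the powers of 1/gam\<close>

lemma f_pos: "k \<ge> 0 \<Longrightarrow> f k > 0"
proof -
  have "Fb (Suc n) > 0" for n by (induction n rule: Fb.induct) auto
  then show "k \<ge> 0 \<Longrightarrow> f k > 0" unfolding f_def by simp
qed

lemma f_minus_one: "f (-1) = 0" and f_minus_two: "f (-2) = 1"
  by (simp_all add: f_def)

(* The recursion of f, in the shifted form relating d to d1 and d2. *)
lemma f_shift: "f (int i) = f (int i - 1) + f (int i - 2)"
  using f_rec[of "int i - 2"] by simp

lemma f_minus_two_pos_iff: "f (int i - 2) > 0 \<longleftrightarrow> i \<noteq> 1"
  using f_pos[of "int i - 2"] f_minus_one f_minus_two
  by (cases i; cases "i - 1") auto

lemma f_minus_one_pos_iff: "f (int i - 1) > 0 \<longleftrightarrow> i \<noteq> 0"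
  using f_pos[of "int i - 1"] f_minus_one by (cases i) auto

lemma f_minus_two_nonneg: "f (int i - 2) \<ge> 0"
  using f_minus_two_pos_iff[of i] f_minus_one by (cases "i = 1") auto

lemma f_minus_one_nonneg: "f (int i - 1) \<ge> 0"
  using f_minus_one_pos_iff[of i] f_minus_one by (cases "i = 0") auto

definition xcoord :: "nat \<Rightarrow> int" where "xcoord i = (-1)^i * f (int i - 2)"
definition ycoord :: "nat \<Rightarrow> int" where "ycoord i = (-1)^(Suc i) * f (int i - 1)"

lemma inverse_gam_power: "inverse (gam ^ i) = real_of_int (xcoord i) + real_of_int (ycoord i) * inverse gam"
proof (induction i)
  case 0
  then show ?case by (simp add: xcoord_def ycoord_def f_minus_one f_minus_two)
next
  case (Suc i)
  have "inverse (gam ^ Suc i) = inverse (gam ^ i) * inverse gam" by simp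
  also have "\<dots> = real_of_int (xcoord i) * inverse gam + real_of_int (ycoord i) * (inverse gam * inverse gam)"
    using Suc by (simp add: algebra_simps)
  also have "\<dots> = real_of_int (ycoord i) + real_of_int (xcoord i - ycoord i) * inverse gam"
    by (simp add: inverse_gam_sq algebra_simps)
  also have "xcoord i - ycoord i = ycoord (Suc i)"
    by (simp add: xcoord_def ycoord_def f_shift[of i] algebra_simps)
  also have "ycoord i = xcoord (Suc i)"
    by (simp add: xcoord_def ycoord_def algebra_simps)
  finally show ?case .
qed

lemma repval_coords:
  "repval is = real_of_int (\<Sum>i\<leftarrow>is. xcoord i) + real_of_int (\<Sum>i\<leftarrow>is. ycoord i) * inverse gam"
  unfolding repval_def by (induction "is") (auto simp: inverse_gam_power algebra_simps)

lemma abs_xcoord: "\<bar>xcoord i\<bar> = f (int i - 2)"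
  by (simp add: xcoord_def abs_mult f_minus_two_nonneg)

lemma abs_ycoord: "\<bar>ycoord i\<bar> = f (int i - 1)"
  by (simp add: ycoord_def abs_mult f_minus_one_nonneg)

lemma xcoord_pos_iff: "xcoord i > 0 \<longleftrightarrow> even i"
  using f_minus_two_pos_iff[of i] f_minus_two_nonneg[of i]
  by (auto simp: xcoord_def minus_one_power_iff)

lemma xcoord_neg_iff: "xcoord i < 0 \<longleftrightarrow> odd i \<and> i \<noteq> 1"
  using f_minus_two_pos_iff[of i] f_minus_two_nonneg[of i]
  by (auto simp: xcoord_def minus_one_power_iff)

lemma ycoord_pos_iff: "ycoord i > 0 \<longleftrightarrow> odd i"
  using f_minus_one_pos_iff[of i] f_minus_one_nonneg[of i]
  by (auto simp: ycoord_def minus_one_power_iff)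

lemma ycoord_neg_iff: "ycoord i < 0 \<longleftrightarrow> even i \<and> i \<noteq> 0"
  using f_minus_one_pos_iff[of i] f_minus_one_nonneg[of i]
  by (auto simp: ycoord_def minus_one_power_iff)

lemma d1_coords: "d1 is = (\<Sum>i\<leftarrow>is. \<bar>xcoord i\<bar>)"
  unfolding d1_def by (simp add: abs_xcoord)

lemma d2_coords: "d2 is = (\<Sum>i\<leftarrow>is. \<bar>ycoord i\<bar>)"
  unfolding d2_def by (simp add: abs_ycoord)

lemma d_eq_d1_plus_d2: "d is = d1 is + d2 is"
  unfolding d_def d1_def d2_def by (simp add: f_shift sum_list_addf)

section \<open>The equality case of the triangle inequality\<close>

lemma abs_sum_list_eq_iff:
  fixes xs :: "'a::linordered_idom list"
  shows "\<bar>sum_list xs\<bar> = sum_list (map abs xs) \<longleftrightarrow> \<not> (\<exists>a\<in>set xs. \<exists>b\<in>set xs. 0 < a \<and> b < 0)"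
proof
  assume eq: "\<bar>sum_list xs\<bar> = sum_list (map abs xs)"
  show "\<not> (\<exists>a\<in>set xs. \<exists>b\<in>set xs. 0 < a \<and> b < 0)"
  proof
    assume "\<exists>a\<in>set xs. \<exists>b\<in>set xs. 0 < a \<and> b < 0"
    then obtain a b where ab: "a \<in> set xs" "b \<in> set xs" "0 < a" "b < 0" by blast
    have "0 < \<bar>b\<bar> - b" using ab by (simp add: abs_if)
    also have "\<bar>b\<bar> - b \<le> (\<Sum>x\<leftarrow>xs. \<bar>x\<bar> - x)"
      using ab(2) by (intro member_le_sum_list) (auto simp: abs_if)
    finally have below: "sum_list xs < sum_list (map abs xs)"
      by (simp add: sum_list_subtractf)
    have "0 < \<bar>a\<bar> + a" using ab by (simp add: abs_if)
    also have "\<bar>a\<bar> + a \<le> (\<Sum>x\<leftarrow>xs. \<bar>x\<bar> + x)"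
      using ab(1) by (intro member_le_sum_list) (auto simp: abs_if)
    finally have "- sum_list xs < sum_list (map abs xs)"
      by (simp add: sum_list_addf)
    with below eq show False by (simp add: abs_if split: if_splits)
  qed
next
  assume "\<not> (\<exists>a\<in>set xs. \<exists>b\<in>set xs. 0 < a \<and> b < 0)"
  then consider "\<forall>x\<in>set xs. 0 \<le> x" | "\<forall>x\<in>set xs. x \<le> 0"
    by (meson linorder_not_le)
  then show "\<bar>sum_list xs\<bar> = sum_list (map abs xs)"
  proof cases
    case 1
    then have "sum_list (map abs xs) = sum_list xs"
      by (induction xs) auto
    with 1 show ?thesis by (simp add: sum_list_nonneg)
  next
    case 2
    then have "sum_list (map abs xs) = - sum_list xs"
      by (induction xs) auto
    with 2 show ?thesis by (simp add: sum_list_nonpos)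
  qed
qed

lemma d1_tight_iff:
  "d1 is = \<bar>\<Sum>i\<leftarrow>is. xcoord i\<bar> \<longleftrightarrow> \<not> (\<exists>a\<in>set is. \<exists>b\<in>set is. even a \<and> odd b \<and> b \<noteq> 1)"
proof -
  have "d1 is = sum_list (map abs (map xcoord is))" by (simp add: d1_coords o_def)
  moreover have "(\<exists>a\<in>set (map xcoord is). \<exists>b\<in>set (map xcoord is). 0 < a \<and> b < 0) \<longleftrightarrow>
      (\<exists>a\<in>set is. \<exists>b\<in>set is. even a \<and> odd b \<and> b \<noteq> 1)"
    by (simp add: xcoord_pos_iff xcoord_neg_iff)
  ultimately show ?thesis using abs_sum_list_eq_iff[of "map xcoord is"] by (simp add: eq_commute)
qed

lemma d2_tight_iff:
  "d2 is = \<bar>\<Sum>i\<leftarrow>is. ycoord i\<bar> \<longleftrightarrow> \<not> (\<exists>a\<in>set is. \<exists>b\<in>set is. even a \<and> a \<noteq> 0 \<and> odd b)"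
proof -
  have "d2 is = sum_list (map abs (map ycoord is))" by (simp add: d2_coords o_def)
  moreover have "(\<exists>a\<in>set (map ycoord is). \<exists>b\<in>set (map ycoord is). 0 < a \<and> b < 0) \<longleftrightarrow>
      (\<exists>a\<in>set is. \<exists>b\<in>set is. even a \<and> a \<noteq> 0 \<and> odd b)"
    by (auto simp: ycoord_pos_iff ycoord_neg_iff)
  ultimately show ?thesis using abs_sum_list_eq_iff[of "map ycoord is"] by (simp add: eq_commute)
qed

lemma parity_patterns_iff:
  fixes S :: "nat set"
  shows "((\<forall>x\<in>S. x \<le> 1) \<or> (\<forall>a\<in>S. \<forall>b\<in>S. even a = even b)) \<longleftrightarrow>
    \<not> (\<exists>a\<in>S. \<exists>b\<in>S. even a \<and> odd b \<and> b \<noteq> 1) \<and>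
    \<not> (\<exists>a\<in>S. \<exists>b\<in>S. even a \<and> a \<noteq> 0 \<and> odd b)"
    (is "?small \<or> ?same \<longleftrightarrow> \<not> ?pattern1 \<and> \<not> ?pattern2")
proof
  assume "?small \<or> ?same"
  then show "\<not> ?pattern1 \<and> \<not> ?pattern2"
  proof
    assume small: ?small
    have odd_one: "b = 1" if "b \<in> S" "odd b" for b
    proof -
      have "b \<le> 1" using small that(1) by blast
      with that(2) show ?thesis by (cases b) auto
    qed
    have even_zero: "a = 0" if "a \<in> S" "even a" for a
    proof -
      have "a \<le> 1" using small that(1) by blast
      with that(2) show ?thesis by (cases a) auto
    qed
    show ?thesis using odd_one even_zero by fastforce
  next
    assume same: ?same
    have no_mixed: False if "a \<in> S" "b \<in> S" "even a" "odd b" for a b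
      using bspec[OF bspec[OF same that(1)] that(2)] that(3,4) by simp
    show ?thesis by (blast intro: no_mixed)
  qed
next
  assume none: "\<not> ?pattern1 \<and> \<not> ?pattern2"
  show "?small \<or> ?same"
  proof (rule disjCI)
    assume "\<not> ?same"
    then have "\<exists>a\<in>S. \<exists>b\<in>S. even a \<noteq> even b" by simp
    then obtain a' b' where "a' \<in> S" "b' \<in> S" "even a' \<noteq> even b'" by (elim bexE)
    then obtain a b where ab: "a \<in> S" "b \<in> S" "even a" "odd b"
      by (cases "even a'") auto
    show ?small
    proof (rule ballI, rule ccontr)
      fix c assume c: "c \<in> S" "\<not> c \<le> 1"
      (* an even c >= 2 would pair with b, an odd c >= 3 with a *)
      show False
      proof (cases "even c")
        case True
        with c ab none show False by force
      next
        case False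
        with c ab none show False by force
      qed
    qed
  qed
qed

lemma sorted_last_le_iff:
  fixes xs :: "nat list"
  assumes "sorted xs" "xs \<noteq> []"
  shows "last xs \<le> c \<longleftrightarrow> (\<forall>x\<in>set xs. x \<le> c)"
proof -
  have "x \<le> last xs" if "x \<in> set xs" for x
    using assms that by (induction xs) (auto simp: last_in_set)
  then show ?thesis using last_in_set[OF assms(2)] by (auto intro: order_trans)
qed

lemma representation_coords:
  assumes "repval is = real_of_int m + real_of_int n * inverse gam"
  shows "m = (\<Sum>i\<leftarrow>is. xcoord i)" and "n = (\<Sum>i\<leftarrow>is. ycoord i)"
  using Zgam_coords_unique assms repval_coords[of "is"] by metis+

lemma d2_strict_if_positive_mixed:
  assumes "a \<in> set is" "b \<in> set is" "0 < a" "0 < b" "even a \<noteq> even b"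
  shows "d2 is > \<bar>\<Sum>i\<leftarrow>is. ycoord i\<bar>"
proof -
  have "\<exists>a\<in>set is. \<exists>b\<in>set is. even a \<and> a \<noteq> 0 \<and> odd b"
    using assms by (cases "even a") auto
  then have "d2 is \<noteq> \<bar>\<Sum>i\<leftarrow>is. ycoord i\<bar>" using d2_tight_iff by blast
  moreover have "\<bar>\<Sum>i\<leftarrow>is. ycoord i\<bar> \<le> d2 is"
    using sum_list_abs[of "map ycoord is"] by (simp add: d2_coords o_def)
  ultimately show ?thesis by simp
qed

theorem mainTheorem13:
  fixes m n :: int and "is" :: "nat list"
  assumes pos: "real_of_int m + real_of_int n * inverse gam > 0"
    and srt: "sorted is"
    and rep: "repval is = real_of_int m + real_of_int n * inverse gam"
  shows "(d is \<ge> \<bar>m\<bar> + \<bar>n\<bar> \<and> d1 is \<ge> \<bar>m\<bar> \<and> d2 is \<ge> \<bar>n\<bar>)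
    \<and> ((last is \<le> 1 \<or> (\<forall>a\<in>set is. \<forall>b\<in>set is. even a = even b)) \<longrightarrow>
           d is = \<bar>m\<bar> + \<bar>n\<bar> \<and> (d1 is, d2 is) = (\<bar>m\<bar>, \<bar>n\<bar>))
    \<and> (\<not> (last is \<le> 1 \<or> (\<forall>a\<in>set is. \<forall>b\<in>set is. even a = even b)) \<longrightarrow>
           d is > \<bar>m\<bar> + \<bar>n\<bar> \<and> (d1 is, d2 is) \<noteq> (\<bar>m\<bar>, \<bar>n\<bar>))
    \<and> ((\<exists>a\<in>set is. \<exists>b\<in>set is. 0 < a \<and> 0 < b \<and> even a \<noteq> even b) \<longrightarrow> d2 is > \<bar>n\<bar>)"
proof -
  (* Naming the two case conditions lets the final step treat them as atoms. *)
  define equal_case where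
    "equal_case \<longleftrightarrow> last is \<le> 1 \<or> (\<forall>a\<in>set is. \<forall>b\<in>set is. even a = even b)"
  define positive_mixed where
    "positive_mixed \<longleftrightarrow> (\<exists>a\<in>set is. \<exists>b\<in>set is. 0 < a \<and> 0 < b \<and> even a \<noteq> even b)"
  note m = representation_coords(1)[OF rep] and n = representation_coords(2)[OF rep]
  have lower: "\<bar>m\<bar> \<le> d1 is" "\<bar>n\<bar> \<le> d2 is"
    unfolding m n d1_coords d2_coords using sum_list_abs[of "map _ is"] by (simp_all add: o_def)
  have "is \<noteq> []" using pos rep by (auto simp: repval_def)
  then have "last is \<le> 1 \<longleftrightarrow> (\<forall>x\<in>set is. x \<le> 1)" by (rule sorted_last_le_iff[OF srt])
  then have tight: "equal_case \<longleftrightarrow> d1 is = \<bar>m\<bar> \<and> d2 is = \<bar>n\<bar>"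
    unfolding equal_case_def m n
    using parity_patterns_iff[of "set is"] d1_tight_iff[of "is"] d2_tight_iff[of "is"] by simp
  have mixed: "positive_mixed \<Longrightarrow> d2 is > \<bar>n\<bar>"
    unfolding positive_mixed_def n using d2_strict_if_positive_mixed by blast
  show ?thesis
    unfolding prod.inject equal_case_def[symmetric] positive_mixed_def[symmetric]
    using lower tight mixed d_eq_d1_plus_d2[of "is"] by auto
qed

end
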